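(* Assume Condition 1 and let $B>0$ and $\epsilon\in(0,2\lambda-1)$. There is a constant $C<\infty$ (not depending on $n$ or $\delta$) such that for all $n\ge1$ and all $\delta\in(0,1]$, $$\mathbb{E}\sup_{b\in\mathcal E(2B),\ |b|_2\le\delta}\Big|\frac{1}{\sqrt n}\sum_{t=1}^n\varepsilon_tX_t(b)\Big|\le C\,\delta^{\frac{2\lambda-\epsilon-1}{2\lambda-\epsilon}} .$$
   Context: Let $(\varepsilon_t)_{t\in\mathbb{Z}}$ be i.i.d. real random variables with $\mathbb{E}\varepsilon_t=0$, $\mathbb{E}\varepsilon_t^2=\sigma^2\in(0,\infty)$, $\mathbb{E}\varepsilon_t^4<\infty$. Fix $\lambda>1/2$ and positive constants $\lambda_k$, $k\ge1$, with $c_1k^\lambda\le\lambda_k\le c_2k^\lambda$ for some constants $0<c_1\le c_2<\infty$. For a real sequence $b=(b_k)_{k\ge1}$ put $|b|_2^2=\sum_k b_k^2$, $|b|_{\mathcal E}^2=\sum_{k\ge1}\lambda_k^2b_k^2$, $\mathcal E=\{b:|b|_{\mathcal E}<\infty\}$ and $\mathcal E(B)=\{b:|b|_{\mathcal E}\le B\}$. Condition 1: $\varphi=(\varphi_k)_{k\ge1}\in\mathcal E$; $1-\sum_{k\ge1}\varphi_kz^k\neq0$ for all complex $z$ with $|z|\le1$; and $(Y_t)_{t\in\mathbb{Z}}$ is the causal solution (each $Y_t$ measurable w.r.t. $\sigma(\varepsilon_s:s\le t)$, with $\sup_t\mathbb{E}Y_t^2<\infty$) of $Y_t=\sum_{k\ge1}\varphi_kY_{t-k}+\varepsilon_t$,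 $t\in\mathbb{Z}$. For $a\in\mathcal E$, $X_t(a)=\sum_{k\ge1}a_kY_{t-k}$ (almost surely convergent since $\sum_k|a_k|<\infty$ for $a\in\mathcal E$). *)

theory Defs
  imports "HOL-Probability.Probability"
begin

text \<open>Sequences b = (b_k)_{k>=1} are represented as functions nat => real;
  the value at index 0 is ignored everywhere.\<close>

definition inE :: "(nat \<Rightarrow> real) \<Rightarrow> (nat \<Rightarrow> real) \<Rightarrow> bool" where
  "inE lam b \<longleftrightarrow> summable (\<lambda>k. (lam (Suc k) * b (Suc k))^2)"

definition Enorm :: "(nat \<Rightarrow> real) \<Rightarrow> (nat \<Rightarrow> real) \<Rightarrow> real" where
  "Enorm lam b = sqrt (\<Sum>k. (lam (Suc k) * b (Suc k))^2)"

definition l2norm :: "(nat \<Rightarrow> real) \<Rightarrow> real" where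
  "l2norm b = sqrt (\<Sum>k. (b (Suc k))^2)"

definition Xt :: "(int \<Rightarrow> 'a \<Rightarrow> real) \<Rightarrow> (nat \<Rightarrow> real) \<Rightarrow> int \<Rightarrow> 'a \<Rightarrow> real" where
  "Xt Y a t x = (\<Sum>k. a (Suc k) * Y (t - int (Suc k)) x)"

definition past_sigma :: "'a measure \<Rightarrow> (int \<Rightarrow> 'a \<Rightarrow> real) \<Rightarrow> int \<Rightarrow> 'a measure" where
  "past_sigma M e t = sigma (space M) {e s -` A \<inter> space M | s A. s \<le> t \<and> A \<in> sets borel}"

text \<open>Outer expectation (the supremum need not be measurable a priori).\<close>
definition outer_nn_integral :: "'a measure \<Rightarrow> ('a \<Rightarrow> ennreal) \<Rightarrow> ennreal" where
  "outer_nn_integral M f =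
     (INF g \<in> {g \<in> borel_measurable M. \<forall>x\<in>space M. f x \<le> g x}. integral\<^sup>N M g)"

end

theory Submission
  imports Defs
begin

(* Fix a sample point and write the normalised sum as a series over lags,
   sum_k b_k Z_k with Z_k = sum_t eps_t Y_(t-k).  Weighted AM-GM with weights
   w_k = delta^(-1-theta) (1 + delta^2 lambda_k^2), theta = 1 / (2 lambda - epsilon), splits every
   term into a part depending only on b, whose sum delta^(-1-theta) (|b|_2^2 + delta^2 |b|_E^2)
   is at most (1 + 4 B^2) delta^(1-theta) on the whole ball, and a part Z_k^2 / w_k independent
   of b.  This dominates the supremum by a single random variable.  As eps_t is independent of
   the past, the Z_k are sums of orthogonal increments, so E Z_k^2 <= n E eps^2 sup_t E Y_t^2,
   and sum_k 1 / w_k = O(delta^(1-theta)) because 2 lambda theta > 1. *)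

lemma abs_mult_le_weighted_sq:
  assumes "(g::real) > 0"
  shows "\<bar>u * w\<bar> \<le> (g * u^2 + w^2 / g) / 2"
proof -
  have "0 \<le> (g * \<bar>u\<bar> - \<bar>w\<bar>)^2 / g" using assms by simp
  also have "(g * \<bar>u\<bar> - \<bar>w\<bar>)^2 / g = g * u^2 + w^2 / g - 2 * \<bar>u * w\<bar>"
    using assms by (simp add: power2_eq_square field_simps abs_mult)
  finally show ?thesis by simp
qed

lemma ennreal_abs_suminf_le: "ennreal \<bar>suminf (h :: nat \<Rightarrow> real)\<bar> \<le> (\<Sum>k. ennreal \<bar>h k\<bar>)"
proof (cases "summable (\<lambda>k. \<bar>h k\<bar>)")
  case True
  then have "(\<Sum>k. ennreal \<bar>h k\<bar>) = ennreal (\<Sum>k. \<bar>h k\<bar>)"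
    by (intro suminf_ennreal2) auto
  with summable_rabs[OF True] show ?thesis
    by (simp add: ennreal_leI)
next
  case False
  then have "(\<Sum>k. ennreal \<bar>h k\<bar>) = top"
    by (intro summable_iff_suminf_neq_top) auto
  then show ?thesis by simp
qed

lemma abs_sum_mult_suminf_le:
  fixes e :: "'i \<Rightarrow> real" and Y :: "'i \<Rightarrow> nat \<Rightarrow> real" and b w :: "nat \<Rightarrow> real"
  assumes "finite T" and w_pos: "\<And>k. w k > 0"
    and b_sum: "summable (\<lambda>k. w k * (b k)^2)"
    and Y_sum: "\<And>t. t \<in> T \<Longrightarrow> summable (\<lambda>k. (Y t k)^2 / w k)"
  shows "ennreal \<bar>\<Sum>t\<in>T. e t * (\<Sum>k. b k * Y t k)\<bar>
    \<le> ennreal ((\<Sum>k. w k * (b k)^2) / 2) + (\<Sum>k. ennreal ((\<Sum>t\<in>T. e t * Y t k)^2 / (2 * w k)))"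
proof -
  define Z where "Z k = (\<Sum>t\<in>T. e t * Y t k)" for k
  have summable_bY: "summable (\<lambda>k. b k * Y t k)" if "t \<in> T" for t
  proof (rule summable_rabs_cancel, rule summable_comparison_test)
    show "\<exists>N. \<forall>k\<ge>N. norm \<bar>b k * Y t k\<bar> \<le> (w k * (b k)^2 + (Y t k)^2 / w k) / 2"
      using abs_mult_le_weighted_sq[OF w_pos] by auto
    show "summable (\<lambda>k. (w k * (b k)^2 + (Y t k)^2 / w k) / 2)"
      using b_sum Y_sum[OF that] by (intro summable_divide summable_add)
  qed
  have "(\<Sum>t\<in>T. e t * (\<Sum>k. b k * Y t k)) = (\<Sum>t\<in>T. \<Sum>k. e t * (b k * Y t k))"
    using summable_bY by (intro sum.cong refl suminf_mult[symmetric]) auto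
  also have "\<dots> = (\<Sum>k. \<Sum>t\<in>T. e t * (b k * Y t k))"
    using summable_bY by (intro suminf_sum[symmetric] summable_mult) auto
  also have "\<dots> = (\<Sum>k. b k * Z k)"
    unfolding Z_def by (simp add: sum_distrib_left algebra_simps)
  finally have "ennreal \<bar>\<Sum>t\<in>T. e t * (\<Sum>k. b k * Y t k)\<bar> \<le> (\<Sum>k. ennreal \<bar>b k * Z k\<bar>)"
    using ennreal_abs_suminf_le by simp
  also have "\<dots> \<le> (\<Sum>k. ennreal (w k * (b k)^2 / 2) + ennreal ((Z k)^2 / (2 * w k)))"
  proof (intro suminf_le summableI)
    fix k
    have "\<bar>b k * Z k\<bar> \<le> w k * (b k)^2 / 2 + (Z k)^2 / (2 * w k)"
      using abs_mult_le_weighted_sq[OF w_pos, of "b k" "Z k"] by (simp add: field_simps)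
    then show "ennreal \<bar>b k * Z k\<bar> \<le> ennreal (w k * (b k)^2 / 2) + ennreal ((Z k)^2 / (2 * w k))"
      using w_pos[of k] by (simp add: ennreal_plus[symmetric] ennreal_leI del: ennreal_plus)
  qed
  also have "\<dots> = ennreal ((\<Sum>k. w k * (b k)^2) / 2) + (\<Sum>k. ennreal ((Z k)^2 / (2 * w k)))"
    using b_sum w_pos
    by (simp add: suminf_add[symmetric] summableI suminf_ennreal2 summable_divide suminf_divide
        less_imp_le del: ennreal_plus)
  finally show ?thesis
    unfolding Z_def .
qed

lemma inverse_one_plus_sq_le_powr:
  fixes y th :: real
  assumes "y > 0" "0 \<le> th" "th \<le> 1"
  shows "1 / (1 + y^2) \<le> y powr (-2 * th)"
proof (cases "y \<ge> 1")
  case True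
  have "1 / (1 + y^2) \<le> 1 / y^2"
    using assms by (simp add: frac_le)
  also have "\<dots> = y powr (-2)"
    using assms by (simp add: powr_minus powr_numeral divide_inverse)
  also have "\<dots> \<le> y powr (-2 * th)"
    using True assms by (intro powr_mono) auto
  finally show ?thesis .
next
  case False
  have "1 / (1 + y^2) \<le> 1"
    by (simp add: field_simps add_pos_nonneg)
  also have "1 \<le> y powr (-2 * th)"
    using False assms by (simp add: powr_minus one_le_inverse powr_le1)
  finally show ?thesis .
qed

lemma inverse_weight_le:
  fixes d c l lamb th :: real and m :: nat
  assumes "d > 0" "c > 0" "m \<ge> 1" "c * real m powr lamb \<le> l" "0 \<le> th" "th \<le> 1"
  shows "1 / (d powr (-1 - th) * (1 + (d * l)^2))
    \<le> c powr (-2 * th) * d powr (1 - th) * real m powr (-2 * lamb * th)"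
proof -
  have lower: "0 < d * (c * real m powr lamb)" "d * (c * real m powr lamb) \<le> d * l"
    using assms by auto
  then have "0 < d * l"
    by linarith
  have "d powr (-1 - th) = 1 / d powr (1 + th)"
    using powr_minus_divide[of d "1 + th"] by simp
  then have "1 / (d powr (-1 - th) * (1 + (d * l)^2)) = d powr (1 + th) * (1 / (1 + (d * l)^2))"
    by simp
  also have "\<dots> \<le> d powr (1 + th) * (d * l) powr (-2 * th)"
    using \<open>0 < d * l\<close> assms by (intro mult_left_mono inverse_one_plus_sq_le_powr) auto
  also have "\<dots> \<le> d powr (1 + th) * (d * (c * real m powr lamb)) powr (-2 * th)"
    using lower assms by (intro mult_left_mono powr_mono2') auto
  also have "\<dots> = c powr (-2 * th) * d powr (1 - th) * real m powr (-2 * lamb * th)"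
    using assms by (simp add: powr_mult powr_powr powr_add[symmetric] mult_ac)
  finally show ?thesis .
qed

definition lag_weight :: "(nat \<Rightarrow> real) \<Rightarrow> real \<Rightarrow> real \<Rightarrow> nat \<Rightarrow> real" where
  "lag_weight lam d th k = d powr (-1 - th) * (1 + (d * lam (Suc k))^2)"

lemma lag_weight_pos: "d > 0 \<Longrightarrow> lag_weight lam d th k > 0"
  unfolding lag_weight_def by (simp add: add_pos_nonneg)

lemma summable_inverse_lag_weight:
  fixes lam :: "nat \<Rightarrow> real" and c d lamb th :: real
  assumes "d > 0" "c > 0" "0 \<le> th" "th \<le> 1"
    and lam_lb: "\<And>k. k \<ge> 1 \<Longrightarrow> c * real k powr lamb \<le> lam k"
    and zeta: "summable (\<lambda>k. real (Suc k) powr (-2 * lamb * th))"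
  shows "summable (\<lambda>k. 1 / lag_weight lam d th k)"
    and "(\<Sum>k. 1 / lag_weight lam d th k)
      \<le> c powr (-2 * th) * d powr (1 - th) * (\<Sum>k. real (Suc k) powr (-2 * lamb * th))"
proof -
  have le: "1 / lag_weight lam d th k
      \<le> c powr (-2 * th) * d powr (1 - th) * real (Suc k) powr (-2 * lamb * th)" for k
    unfolding lag_weight_def by (rule inverse_weight_le) (use assms lam_lb[of "Suc k"] in auto)
  have pos: "0 \<le> 1 / lag_weight lam d th k" for k
    using lag_weight_pos[OF \<open>d > 0\<close>] by (simp add: less_imp_le)
  have bound: "summable (\<lambda>k. c powr (-2 * th) * d powr (1 - th) * real (Suc k) powr (-2 * lamb * th))"
    using zeta by (rule summable_mult)
  show "summable (\<lambda>k. 1 / lag_weight lam d th k)"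
    by (rule summable_comparison_test[OF _ bound]) (use le pos in auto)
  then show "(\<Sum>k. 1 / lag_weight lam d th k)
      \<le> c powr (-2 * th) * d powr (1 - th) * (\<Sum>k. real (Suc k) powr (-2 * lamb * th))"
    using suminf_le[OF le _ bound] suminf_mult[OF zeta] by simp
qed

lemma integrable_mult_of_square_integrable:
  fixes f g :: "'a \<Rightarrow> real"
  assumes "f \<in> borel_measurable M" "g \<in> borel_measurable M"
    and "integrable M (\<lambda>x. (f x)^2)" "integrable M (\<lambda>x. (g x)^2)"
  shows "integrable M (\<lambda>x. f x * g x)"
proof (rule Bochner_Integration.integrable_bound)
  show "integrable M (\<lambda>x. ((f x)^2 + (g x)^2) / 2)"
    using assms by auto
  show "AE x in M. norm (f x * g x) \<le> norm (((f x)^2 + (g x)^2) / 2)"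
    using abs_mult_le_weighted_sq[of 1] by auto
qed (use assms in measurable)

lemma outer_nn_integral_le_nn_integral:
  assumes g: "g \<in> borel_measurable M" and P: "{x \<in> space M. P x} \<in> sets M" "AE x in M. P x"
    and le: "\<And>x. x \<in> space M \<Longrightarrow> P x \<Longrightarrow> f x \<le> g x"
  shows "outer_nn_integral M f \<le> integral\<^sup>N M g"
proof -
  define g' where "g' x = (if P x then g x else \<top>)" for x
  have "g' \<in> borel_measurable M"
    unfolding g'_def using g P(1) by (intro measurable_If) auto
  moreover have "\<forall>x\<in>space M. f x \<le> g' x"
    using le by (simp add: g'_def)
  ultimately have "outer_nn_integral M f \<le> integral\<^sup>N M g'"
    unfolding outer_nn_integral_def by (intro INF_lower) auto
  also have "integral\<^sup>N M g' = integral\<^sup>N M g"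
    by (rule nn_integral_cong_AE) (use P(2) in \<open>auto simp: g'_def\<close>)
  finally show ?thesis .
qed

lemma sets_past_sigma:
  "sets (past_sigma M e t) =
     sigma_sets (space M) {e s -` A \<inter> space M | s A. s \<le> t \<and> A \<in> sets borel}"
  unfolding past_sigma_def by (rule sets_measure_of) auto

lemma space_past_sigma: "space (past_sigma M e t) = space M"
  unfolding past_sigma_def by (rule space_measure_of) auto

lemma subalgebra_past_sigma:
  assumes "\<And>s. e s \<in> borel_measurable M"
  shows "subalgebra M (past_sigma M e t)"
  unfolding subalgebra_def sets_past_sigma space_past_sigma
  by (auto intro!: sets.sigma_sets_subset measurable_sets[OF assms])

lemma measurable_past_sigma_mono:
  assumes "W \<in> borel_measurable (past_sigma M e s)" and "s \<le> t"
  shows "W \<in> borel_measurable (past_sigma M e t)"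
proof (rule measurable_from_subalg[OF _ assms(1)])
  show "subalgebra (past_sigma M e t) (past_sigma M e s)"
    unfolding subalgebra_def sets_past_sigma space_past_sigma
    using assms(2) by (intro conjI refl sigma_sets_mono') (blast intro: order_trans)
qed

lemma measurable_past_sigma_innovation:
  assumes "s \<le> t"
  shows "e s \<in> borel_measurable (past_sigma M e t)"
proof (rule borel_measurableI)
  fix A :: "real set" assume "open A"
  then have "e s -` A \<inter> space M \<in> {e s' -` A \<inter> space M | s' A. s' \<le> t \<and> A \<in> sets borel}"
    using assms by (intro CollectI exI[of _ s] exI[of _ A] conjI refl) auto
  then show "e s -` A \<inter> space (past_sigma M e t) \<in> sets (past_sigma M e t)"
    unfolding sets_past_sigma space_past_sigma by (rule sigma_sets.Basic)
qed

context prob_space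
begin

lemma indep_var_past_sigma:
  assumes indep: "indep_vars (\<lambda>_. borel) e UNIV"
    and W: "W \<in> borel_measurable (past_sigma M e s)" and "s < t"
  shows "indep_var borel (e t) borel (W :: 'a \<Rightarrow> real)"
proof -
  have rv: "\<And>s. e s \<in> borel_measurable M"
    using indep unfolding indep_vars_def2 by auto
  let ?E = "\<lambda>i. {e i -` A \<inter> space M | A. A \<in> sets borel}"
  let ?I = "\<lambda>b::bool. if b then {t} else {..s}"
  have blocks: "indep_sets (\<lambda>j. sigma_sets (space M) (\<Union>i\<in>?I j. ?E i)) UNIV"
  proof (rule indep_sets_collect_sigma)
    show "indep_sets ?E (\<Union>j\<in>UNIV. ?I j)"
      using indep unfolding indep_vars_def2 by (auto intro: indep_sets_mono_index)
    show "Int_stable (?E i)" for i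
    proof (rule Int_stableI)
      fix a b assume "a \<in> ?E i" "b \<in> ?E i"
      then obtain A B where "A \<in> sets borel" "B \<in> sets borel"
        and "a = e i -` A \<inter> space M" "b = e i -` B \<inter> space M"
        by blast
      then show "a \<inter> b \<in> ?E i"
        by (intro CollectI exI[of _ "A \<inter> B"] conjI) auto
    qed
    show "disjoint_family_on ?I UNIV"
      using \<open>s < t\<close> by (auto simp: disjoint_family_on_def)
  qed
  have W_sets: "sigma_sets (space M) {W -` A \<inter> space M | A. A \<in> sets borel}
      \<subseteq> sigma_sets (space M) (\<Union>i\<in>?I False. ?E i)"
  proof (rule sigma_sets_mono, safe)
    fix A :: "real set" assume "A \<in> sets borel"
    then have "W -` A \<inter> space M \<in> sets (past_sigma M e s)"
      using measurable_sets[OF W] by (simp add: space_past_sigma)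
    moreover have "(\<Union>i\<in>?I False. ?E i) = {e s' -` A \<inter> space M | s' A. s' \<le> s \<and> A \<in> sets borel}"
      by auto
    ultimately show "W -` A \<inter> space M \<in> sigma_sets (space M) (\<Union>i\<in>?I False. ?E i)"
      by (simp add: sets_past_sigma)
  qed
  have e_sets: "sigma_sets (space M) {e t -` A \<inter> space M | A. A \<in> sets borel}
      \<subseteq> sigma_sets (space M) (\<Union>i\<in>?I True. ?E i)"
    by simp
  show ?thesis
    unfolding indep_var_eq indep_set_def
  proof (intro conjI)
    show "random_variable borel W"
      by (rule measurable_from_subalg[OF subalgebra_past_sigma[OF rv] W])
    show "indep_sets (case_bool (sigma_sets (space M) {e t -` A \<inter> space M |A. A \<in> sets borel})
        (sigma_sets (space M) {W -` A \<inter> space M |A. A \<in> sets borel})) UNIV"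
      by (rule indep_sets_mono_sets[OF blocks]) (use W_sets e_sets in \<open>auto split: bool.split\<close>)
  qed (rule rv)
qed

lemma expectation_sq_innovation_mult:
  assumes indep: "indep_vars (\<lambda>_. borel) e UNIV"
    and e2: "integrable M (\<lambda>x. (e t x)^2)"
    and W: "W \<in> borel_measurable (past_sigma M e (t - 1))" "integrable M (\<lambda>x. (W x)^2)"
  shows "integrable M (\<lambda>x. (e t x * W x)^2)"
    and "expectation (\<lambda>x. (e t x * W x)^2) = expectation (\<lambda>x. (e t x)^2) * expectation (\<lambda>x. (W x)^2)"
proof -
  have "indep_var borel ((\<lambda>x. x^2) \<circ> e t) borel ((\<lambda>x. x^2) \<circ> W)"
    by (rule indep_var_compose[OF indep_var_past_sigma[OF indep W(1)]]) auto
  then have "integrable M (\<lambda>x. (e t x)^2 * (W x)^2)"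
    and "expectation (\<lambda>x. (e t x)^2 * (W x)^2) = expectation (\<lambda>x. (e t x)^2) * expectation (\<lambda>x. (W x)^2)"
    using indep_var_integrable indep_var_lebesgue_integral e2 W(2) by (auto simp: comp_def)
  then show "integrable M (\<lambda>x. (e t x * W x)^2)"
    and "expectation (\<lambda>x. (e t x * W x)^2) = expectation (\<lambda>x. (e t x)^2) * expectation (\<lambda>x. (W x)^2)"
    by (simp_all add: power_mult_distrib)
qed

lemma expectation_innovation_products_orthogonal:
  assumes indep: "indep_vars (\<lambda>_. borel) e UNIV"
    and mean0: "expectation (e t) = 0"
    and e2: "\<And>t. integrable M (\<lambda>x. (e t x)^2)"
    and W: "\<And>t. W t \<in> borel_measurable (past_sigma M e (t - 1))" "\<And>t. integrable M (\<lambda>x. (W t x)^2)"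
    and "s < t"
  shows "expectation (\<lambda>x. (e t x * W t x) * (e s x * W s x)) = 0"
proof -
  have rv: "\<And>s. e s \<in> borel_measurable M"
    using indep unfolding indep_vars_def2 by auto
  have W_rv: "\<And>t. W t \<in> borel_measurable M"
    using measurable_from_subalg[OF subalgebra_past_sigma[OF rv] W(1)] .
  define V where "V x = W t x * (e s x * W s x)" for x
  \<comment> \<open>everything but the newest innovation \<open>e t\<close> is determined by the past up to \<open>t - 1\<close>\<close>
  have "V \<in> borel_measurable (past_sigma M e (t - 1))"
  proof -
    have "e s \<in> borel_measurable (past_sigma M e (t - 1))"
      by (rule measurable_past_sigma_innovation) (use \<open>s < t\<close> in simp)
    moreover have "W s \<in> borel_measurable (past_sigma M e (t - 1))"
      by (rule measurable_past_sigma_mono[OF W(1)]) (use \<open>s < t\<close> in simp)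
    ultimately show ?thesis
      unfolding V_def using W(1) by measurable
  qed
  then have "indep_var borel (e t) borel V"
    by (rule indep_var_past_sigma[OF indep]) simp
  moreover have "integrable M V"
    unfolding V_def using expectation_sq_innovation_mult(1)[OF indep e2 W(1,2)] rv W_rv W(2)
    by (intro integrable_mult_of_square_integrable) auto
  ultimately have "expectation (\<lambda>x. e t x * V x) = expectation (e t) * expectation V"
    using indep_var_lebesgue_integral square_integrable_imp_integrable[OF rv e2] by blast
  then show ?thesis
    using mean0 by (simp add: V_def mult_ac)
qed

lemma expectation_sq_sum_innovation_products_le:
  assumes indep: "indep_vars (\<lambda>_. borel) e UNIV"
    and mean0: "\<And>t. expectation (e t) = 0"
    and e2: "\<And>t. integrable M (\<lambda>x. (e t x)^2)" "\<And>t. expectation (\<lambda>x. (e t x)^2) \<le> S"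
    and W: "\<And>t. W t \<in> borel_measurable (past_sigma M e (t - 1))"
      "\<And>t. integrable M (\<lambda>x. (W t x)^2)" "\<And>t. expectation (\<lambda>x. (W t x)^2) \<le> K"
    and "finite T"
  shows "integrable M (\<lambda>x. (\<Sum>t\<in>T. e t x * W t x)^2)"
    and "expectation (\<lambda>x. (\<Sum>t\<in>T. e t x * W t x)^2) \<le> real (card T) * S * K"
proof -
  have rv: "\<And>s. e s \<in> borel_measurable M"
    using indep unfolding indep_vars_def2 by auto
  have W_rv: "\<And>t. W t \<in> borel_measurable M"
    using measurable_from_subalg[OF subalgebra_past_sigma[OF rv] W(1)] .
  define a where "a t x = e t x * W t x" for t x
  have a_sq: "integrable M (\<lambda>x. (a t x)^2)" for t
    unfolding a_def by (rule expectation_sq_innovation_mult(1)[OF indep e2(1) W(1,2)])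
  have a_prod: "integrable M (\<lambda>x. a t x * a s x)" for t s
    using a_sq rv W_rv by (intro integrable_mult_of_square_integrable) (auto simp: a_def)
  have sq_sum: "(\<lambda>x. (\<Sum>t\<in>T. a t x)^2) = (\<lambda>x. \<Sum>t\<in>T. \<Sum>s\<in>T. a t x * a s x)"
    by (simp add: power2_eq_square sum_product)
  show "integrable M (\<lambda>x. (\<Sum>t\<in>T. e t x * W t x)^2)"
    using a_prod unfolding a_def[symmetric] sq_sum by auto
  have cross: "expectation (\<lambda>x. a t x * a s x) = (if s = t then expectation (\<lambda>x. (a t x)^2) else 0)"
    for s t
  proof (cases s t rule: linorder_cases)
    case less
    then show ?thesis
      using expectation_innovation_products_orthogonal[OF indep mean0 e2(1) W(1,2)]
      by (simp add: a_def)
  next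
    case greater
    then show ?thesis
      using expectation_innovation_products_orthogonal[OF indep mean0 e2(1) W(1,2), of t s]
      by (simp add: a_def mult.commute)
  qed (simp add: power2_eq_square)
  have "expectation (\<lambda>x. (\<Sum>t\<in>T. a t x)^2) = (\<Sum>t\<in>T. \<Sum>s\<in>T. expectation (\<lambda>x. a t x * a s x))"
    unfolding sq_sum using a_prod by (simp add: Bochner_Integration.integral_sum)
  also have "\<dots> = (\<Sum>t\<in>T. expectation (\<lambda>x. (a t x)^2))"
    unfolding cross using \<open>finite T\<close> by (simp add: sum.delta)
  also have "\<dots> \<le> (\<Sum>t\<in>T. S * K)"
  proof (rule sum_mono)
    fix t
    have "0 \<le> expectation (\<lambda>x. (e t x)^2)"
      by (rule integral_nonneg_AE) simp
    moreover from this have "0 \<le> S"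
      using e2(2) order_trans by blast
    ultimately show "expectation (\<lambda>x. (a t x)^2) \<le> S * K"
      unfolding a_def expectation_sq_innovation_mult(2)[OF indep e2(1) W(1,2)]
      using e2(2) W(3) by (intro mult_mono) (auto intro: integral_nonneg_AE)
  qed
  finally show "expectation (\<lambda>x. (\<Sum>t\<in>T. e t x * W t x)^2) \<le> real (card T) * S * K"
    by (simp add: a_def)
qed

lemma nn_integral_suminf_sq_div_le:
  fixes F :: "nat \<Rightarrow> 'a \<Rightarrow> real" and w :: "nat \<Rightarrow> real"
  assumes F: "\<And>k. F k \<in> borel_measurable M" "\<And>k. integrable M (\<lambda>x. (F k x)^2)"
      "\<And>k. expectation (\<lambda>x. (F k x)^2) \<le> r"
    and w: "\<And>k. w k > 0" "summable (\<lambda>k. 1 / w k)"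
  shows "(\<integral>\<^sup>+x. (\<Sum>k. ennreal ((F k x)^2 / w k)) \<partial>M) \<le> ennreal (r * (\<Sum>k. 1 / w k))"
proof -
  have "0 \<le> expectation (\<lambda>x. (F 0 x)^2)"
    by (rule integral_nonneg_AE) simp
  then have "0 \<le> r"
    using F(3)[of 0] by linarith
  have "(\<integral>\<^sup>+x. (\<Sum>k. ennreal ((F k x)^2 / w k)) \<partial>M) = (\<Sum>k. \<integral>\<^sup>+x. ennreal ((F k x)^2 / w k) \<partial>M)"
    by (intro nn_integral_suminf) (use F(1) in measurable)
  also have "\<dots> = (\<Sum>k. ennreal (expectation (\<lambda>x. (F k x)^2) / w k))"
    using F(2) w(1) by (simp add: nn_integral_eq_integral less_imp_le)
  also have "\<dots> \<le> (\<Sum>k. ennreal (r * (1 / w k)))"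
    using F(3) w(1) by (intro suminf_le summableI ennreal_leI) (simp add: divide_right_mono less_imp_le)
  also have "\<dots> = ennreal (\<Sum>k. r * (1 / w k))"
    using \<open>0 \<le> r\<close> w by (intro suminf_ennreal2 summable_mult) (auto simp: less_imp_le)
  also have "\<dots> = ennreal (r * (\<Sum>k. 1 / w k))"
    using suminf_mult[OF w(2), of r] by simp
  finally show ?thesis .
qed

lemma AE_suminf_sq_div_finite:
  fixes F :: "nat \<Rightarrow> 'a \<Rightarrow> real" and w :: "nat \<Rightarrow> real"
  assumes F: "\<And>k. F k \<in> borel_measurable M" "\<And>k. integrable M (\<lambda>x. (F k x)^2)"
      "\<And>k. expectation (\<lambda>x. (F k x)^2) \<le> r"
    and w: "\<And>k. w k > 0" "summable (\<lambda>k. 1 / w k)"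
  shows "AE x in M. (\<Sum>k. ennreal ((F k x)^2 / w k)) < \<top>"
proof -
  have "(\<integral>\<^sup>+x. (\<Sum>k. ennreal ((F k x)^2 / w k)) \<partial>M) \<noteq> \<top>"
    using nn_integral_suminf_sq_div_le[of F r w, OF F w] by (auto simp: top_unique)
  moreover have "(\<lambda>x. \<Sum>k. ennreal ((F k x)^2 / w k)) \<in> borel_measurable M"
    using F(1) by measurable
  ultimately show ?thesis
    using nn_integral_PInf_AE by (simp add: less_top)
qed

end

lemma suminf_weighted_sq_le:
  fixes lam b :: "nat \<Rightarrow> real" and c d th B :: real
  assumes "d > 0" "c > 0" and lam_lb: "\<And>k. c \<le> lam (Suc k)"
    and b: "inE lam b" "Enorm lam b \<le> 2 * B" "l2norm b \<le> d"
  shows "summable (\<lambda>k. lag_weight lam d th k * (b (Suc k))^2)"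
    and "(\<Sum>k. lag_weight lam d th k * (b (Suc k))^2)
      \<le> (1 + 4 * B^2) * d powr (1 - th)"
proof -
  define q where "q k = (lam (Suc k) * b (Suc k))^2" for k
  have q_sum: "summable q" "suminf q \<le> 4 * B^2"
    using b(1) sqrt_le_D[OF b(2)[unfolded Enorm_def]]
    by (simp_all add: inE_def q_def[abs_def] power_mult_distrib)
  have b_sq_le: "(b (Suc k))^2 \<le> q k / c^2" for k
  proof -
    have "c^2 * (b (Suc k))^2 \<le> (lam (Suc k))^2 * (b (Suc k))^2"
      using lam_lb[of k] \<open>c > 0\<close> by (intro mult_right_mono power_mono) auto
    then show ?thesis
      using \<open>c > 0\<close> by (simp add: q_def field_simps power_mult_distrib)
  qed
  have b_sum: "summable (\<lambda>k. (b (Suc k))^2)"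
    by (rule summable_comparison_test[OF _ summable_divide[OF q_sum(1)]]) (use b_sq_le in auto)
  have "(\<Sum>k. (b (Suc k))^2) \<le> d^2"
    using sqrt_le_D[OF b(3)[unfolded l2norm_def]] .
  have wb: "lag_weight lam d th k * (b (Suc k))^2
      = d powr (-1 - th) * ((b (Suc k))^2 + d^2 * q k)" for k
    unfolding lag_weight_def q_def by (simp add: algebra_simps power_mult_distrib)
  show "summable (\<lambda>k. lag_weight lam d th k * (b (Suc k))^2)"
    unfolding wb using b_sum q_sum by (intro summable_mult summable_add) auto
  have "(\<Sum>k. lag_weight lam d th k * (b (Suc k))^2)
      = d powr (-1 - th) * (\<Sum>k. (b (Suc k))^2 + d^2 * q k)"
    unfolding wb using b_sum q_sum by (intro suminf_mult summable_add summable_mult)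
  also have "(\<Sum>k. (b (Suc k))^2 + d^2 * q k) = (\<Sum>k. (b (Suc k))^2) + d^2 * suminf q"
    using suminf_add[OF b_sum summable_mult[OF q_sum(1)]] suminf_mult[OF q_sum(1)] by simp
  also have "d powr (-1 - th) * ((\<Sum>k. (b (Suc k))^2) + d^2 * suminf q)
      \<le> d powr (-1 - th) * (d^2 + d^2 * (4 * B^2))"
    using \<open>(\<Sum>k. (b (Suc k))^2) \<le> d^2\<close> q_sum(2) by (intro mult_left_mono add_mono) auto
  also have "\<dots> = (1 + 4 * B^2) * (d powr (-1 - th) * d powr 2)"
    using \<open>d > 0\<close> by (simp add: powr_realpow algebra_simps)
  also have "d powr (-1 - th) * d powr 2 = d powr (1 - th)"
    by (simp add: powr_add[symmetric])
  finally show "(\<Sum>k. lag_weight lam d th k * (b (Suc k))^2)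
      \<le> (1 + 4 * B^2) * d powr (1 - th)" .
qed

lemma abs_sum_innovations_series_le:
  fixes e Y :: "int \<Rightarrow> real" and lam b :: "nat \<Rightarrow> real" and n :: nat and c d th B :: real
  assumes "d > 0" "c > 0" "\<And>k. c \<le> lam (Suc k)"
    and "inE lam b" "Enorm lam b \<le> 2 * B" "l2norm b \<le> d"
    and Y_sum: "\<And>t. t \<in> {1..int n} \<Longrightarrow>
      summable (\<lambda>k. (Y (t - int (Suc k)))^2 / lag_weight lam d th k)"
  shows "ennreal \<bar>(1 / sqrt (real n)) * (\<Sum>t=1..int n. e t * (\<Sum>k. b (Suc k) * Y (t - int (Suc k))))\<bar>
    \<le> ennreal ((1 + 4 * B^2) / 2 * d powr (1 - th))
      + (\<Sum>k. ennreal ((\<Sum>t=1..int n. e t * Y (t - int (Suc k)))^2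
          / (2 * real n * lag_weight lam d th k)))"
proof -
  have w_pos: "lag_weight lam d th k > 0" for k
    using \<open>d > 0\<close> by (rule lag_weight_pos)
  note wb = suminf_weighted_sq_le[OF assms(1-6), of th]
  then have wb_le: "(\<Sum>k. lag_weight lam d th k * (b (Suc k))^2) / 2 \<le> (1 + 4 * B^2) / 2 * d powr (1 - th)"
    by simp
  have "ennreal \<bar>(1 / sqrt (real n)) * (\<Sum>t=1..int n. e t * (\<Sum>k. b (Suc k) * Y (t - int (Suc k))))\<bar>
      = ennreal \<bar>\<Sum>t=1..int n. (e t / sqrt (real n)) * (\<Sum>k. b (Suc k) * Y (t - int (Suc k)))\<bar>"
    by (simp add: sum_distrib_left)
  also have "\<dots> \<le> ennreal ((\<Sum>k. lag_weight lam d th k * (b (Suc k))^2) / 2)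
      + (\<Sum>k. ennreal ((\<Sum>t=1..int n. (e t / sqrt (real n)) * Y (t - int (Suc k)))^2 / (2 * lag_weight lam d th k)))"
    using Y_sum by (intro abs_sum_mult_suminf_le w_pos wb(1)) auto
  also have "(\<lambda>k. (\<Sum>t=1..int n. (e t / sqrt (real n)) * Y (t - int (Suc k)))^2 / (2 * lag_weight lam d th k))
      = (\<lambda>k. (\<Sum>t=1..int n. e t * Y (t - int (Suc k)))^2 / (2 * real n * lag_weight lam d th k))"
  proof (rule ext)
    fix k
    have "(\<Sum>t=1..int n. (e t / sqrt (real n)) * Y (t - int (Suc k)))
        = (\<Sum>t=1..int n. e t * Y (t - int (Suc k))) / sqrt (real n)"
      by (simp add: sum_divide_distrib)
    then show "(\<Sum>t=1..int n. (e t / sqrt (real n)) * Y (t - int (Suc k)))^2 / (2 * lag_weight lam d th k)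
        = (\<Sum>t=1..int n. e t * Y (t - int (Suc k)))^2 / (2 * real n * lag_weight lam d th k)"
      by (simp add: power_divide mult_ac)
  qed
  finally show ?thesis
    using ennreal_leI[OF wb_le] by (meson add_right_mono order_trans)
qed

lemma SUP_abs_sum_innovations_Xt_le:
  fixes e Y :: "int \<Rightarrow> 'a \<Rightarrow> real" and lam :: "nat \<Rightarrow> real" and n :: nat and c d th B :: real
  assumes "d > 0" "c > 0" "\<And>k. c \<le> lam (Suc k)"
    and Y_fin: "\<And>t. t \<in> {1..int n} \<Longrightarrow>
      (\<Sum>k. ennreal ((Y (t - int (Suc k)) x)^2 / lag_weight lam d th k)) < \<top>"
  shows "(\<Squnion>b \<in> {b. inE lam b \<and> Enorm lam b \<le> 2 * B \<and> l2norm b \<le> d}.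
      ennreal \<bar>(1 / sqrt (real n)) * (\<Sum>t=1..int n. e t x * Xt Y b t x)\<bar>)
    \<le> ennreal ((1 + 4 * B^2) / 2 * d powr (1 - th))
      + (\<Sum>k. ennreal ((\<Sum>t=1..int n. e t x * Y (t - int (Suc k)) x)^2 / (2 * real n * lag_weight lam d th k)))"
proof (rule SUP_least, clarify)
  fix b assume "inE lam b" "Enorm lam b \<le> 2 * B" "l2norm b \<le> d"
  moreover have "summable (\<lambda>k. (Y (t - int (Suc k)) x)^2 / lag_weight lam d th k)" if "t \<in> {1..int n}" for t
    using Y_fin[OF that] lag_weight_pos[OF \<open>d > 0\<close>]
    by (intro summable_suminf_not_top) (auto simp: less_imp_le)
  ultimately show "ennreal \<bar>(1 / sqrt (real n)) * (\<Sum>t=1..int n. e t x * Xt Y b t x)\<bar>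
      \<le> ennreal ((1 + 4 * B^2) / 2 * d powr (1 - th))
        + (\<Sum>k. ennreal ((\<Sum>t=1..int n. e t x * Y (t - int (Suc k)) x)^2 / (2 * real n * lag_weight lam d th k)))"
    unfolding Xt_def
    by (rule abs_sum_innovations_series_le[where e="\<lambda>t. e t x" and Y="\<lambda>t. Y t x" and lam=lam,
          OF assms(1-3)])
qed

lemma (in prob_space) nn_integral_suminf_sq_sum_innovations_le:
  fixes e Y :: "int \<Rightarrow> 'a \<Rightarrow> real" and w :: "nat \<Rightarrow> real" and n :: nat
  assumes indep: "indep_vars (\<lambda>_. borel) e UNIV"
    and mean0: "\<And>t. expectation (e t) = 0"
    and e2: "\<And>t. integrable M (\<lambda>x. (e t x)^2)" "\<And>t. expectation (\<lambda>x. (e t x)^2) \<le> S"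
    and Y: "\<And>t. Y t \<in> borel_measurable (past_sigma M e t)"
      "\<And>t. integrable M (\<lambda>x. (Y t x)^2)" "\<And>t. expectation (\<lambda>x. (Y t x)^2) \<le> K"
    and w: "\<And>k. w k > 0" "summable (\<lambda>k. 1 / w k)"
    and "n \<ge> 1"
  shows "(\<integral>\<^sup>+x. (\<Sum>k. ennreal ((\<Sum>t=1..int n. e t x * Y (t - int (Suc k)) x)^2 / (2 * real n * w k))) \<partial>M)
    \<le> ennreal (S * K / 2 * (\<Sum>k. 1 / w k))"
proof -
  have e_rv: "\<And>t. e t \<in> borel_measurable M"
    using indep unfolding indep_vars_def2 by auto
  have Y_rv: "\<And>t. Y t \<in> borel_measurable M"
    using measurable_from_subalg[OF subalgebra_past_sigma[OF e_rv] Y(1)] .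
  have "(\<integral>\<^sup>+x. (\<Sum>k. ennreal ((\<Sum>t=1..int n. e t x * Y (t - int (Suc k)) x)^2 / (2 * real n * w k))) \<partial>M)
      \<le> ennreal (real n * S * K * (\<Sum>k. 1 / (2 * real n * w k)))"
  proof (rule nn_integral_suminf_sq_div_le)
    fix k
    have "Y (t - int (Suc k)) \<in> borel_measurable (past_sigma M e (t - 1))" for t
      by (rule measurable_past_sigma_mono[OF Y(1)]) simp
    from expectation_sq_sum_innovation_products_le[OF indep mean0 e2 this Y(2,3), of "{1..int n}"]
    show "integrable M (\<lambda>x. (\<Sum>t=1..int n. e t x * Y (t - int (Suc k)) x)^2)"
      "expectation (\<lambda>x. (\<Sum>t=1..int n. e t x * Y (t - int (Suc k)) x)^2) \<le> real n * S * K"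
      by auto
    show "(\<lambda>x. \<Sum>t=1..int n. e t x * Y (t - int (Suc k)) x) \<in> borel_measurable M"
      using e_rv Y_rv by measurable
    show "2 * real n * w k > 0"
      using \<open>n \<ge> 1\<close> w(1)[of k] by simp
  next
    show "summable (\<lambda>k. 1 / (2 * real n * w k))"
      using summable_divide[OF w(2), of "2 * real n"] by (simp add: mult_ac)
  qed
  also have "real n * S * K * (\<Sum>k. 1 / (2 * real n * w k)) = S * K / 2 * (\<Sum>k. 1 / w k)"
    using suminf_divide[OF w(2), of "2 * real n"] \<open>n \<ge> 1\<close> by (simp add: mult_ac)
  finally show ?thesis .
qed

context prob_space
begin

lemma outer_nn_integral_sup_le_lag_weights:
  fixes e Y :: "int \<Rightarrow> 'a \<Rightarrow> real" and lam :: "nat \<Rightarrow> real" and n :: nat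
  assumes indep: "indep_vars (\<lambda>_. borel) e UNIV"
    and mean0: "\<And>t. expectation (e t) = 0"
    and e2: "\<And>t. integrable M (\<lambda>x. (e t x)^2)" "\<And>t. expectation (\<lambda>x. (e t x)^2) \<le> S"
    and Y: "\<And>t. Y t \<in> borel_measurable (past_sigma M e t)"
      "\<And>t. integrable M (\<lambda>x. (Y t x)^2)" "\<And>t. expectation (\<lambda>x. (Y t x)^2) \<le> K"
    and "c > 0" "\<And>k. c \<le> lam (Suc k)" and w_sum: "summable (\<lambda>k. 1 / lag_weight lam d th k)"
    and "n \<ge> 1" "d > 0"
  shows "outer_nn_integral M (\<lambda>x. \<Squnion>b \<in> {b. inE lam b \<and> Enorm lam b \<le> 2 * B \<and> l2norm b \<le> d}.
      ennreal \<bar>(1 / sqrt (real n)) * (\<Sum>t=1..int n. e t x * Xt Y b t x)\<bar>)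
    \<le> ennreal ((1 + 4 * B^2) / 2 * d powr (1 - th)) + ennreal (S * K / 2 * (\<Sum>k. 1 / lag_weight lam d th k))"
proof -
  have e_rv: "\<And>t. e t \<in> borel_measurable M"
    using indep unfolding indep_vars_def2 by auto
  have Y_rv: "\<And>t. Y t \<in> borel_measurable M"
    using measurable_from_subalg[OF subalgebra_past_sigma[OF e_rv] Y(1)] .
  define w where "w = lag_weight lam d th"
  define G where "G x = (\<Sum>k. ennreal ((\<Sum>t=1..int n. e t x * Y (t - int (Suc k)) x)^2 / (2 * real n * w k)))" for x
  define good where "good x \<longleftrightarrow> (\<forall>t\<in>{1..int n}. (\<Sum>k. ennreal ((Y (t - int (Suc k)) x)^2 / w k)) < \<top>)" for x
  have w_pos: "w k > 0" for k
    unfolding w_def using \<open>d > 0\<close> by (rule lag_weight_pos)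
  have "AE x in M. good x"
    unfolding good_def using Y_rv Y(2,3) w_pos w_sum[folded w_def]
    by (subst AE_finite_all) (auto intro!: AE_suminf_sq_div_finite)
  moreover have "{x \<in> space M. good x} \<in> sets M"
    unfolding good_def using Y_rv by measurable
  moreover have "(\<Squnion>b \<in> {b. inE lam b \<and> Enorm lam b \<le> 2 * B \<and> l2norm b \<le> d}.
      ennreal \<bar>(1 / sqrt (real n)) * (\<Sum>t=1..int n. e t x * Xt Y b t x)\<bar>)
      \<le> ennreal ((1 + 4 * B^2) / 2 * d powr (1 - th)) + G x" if "good x" for x
    using that unfolding good_def G_def w_def
    by (intro SUP_abs_sum_innovations_Xt_le[where lam=lam, OF \<open>d > 0\<close> assms(8,9)]) auto
  ultimately have "outer_nn_integral M (\<lambda>x. \<Squnion>b \<in> {b. inE lam b \<and> Enorm lam b \<le> 2 * B \<and> l2norm b \<le> d}.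
        ennreal \<bar>(1 / sqrt (real n)) * (\<Sum>t=1..int n. e t x * Xt Y b t x)\<bar>)
      \<le> (\<integral>\<^sup>+x. ennreal ((1 + 4 * B^2) / 2 * d powr (1 - th)) + G x \<partial>M)"
    using e_rv Y_rv by (intro outer_nn_integral_le_nn_integral[where P=good]) (auto simp: G_def)
  also have "\<dots> = ennreal ((1 + 4 * B^2) / 2 * d powr (1 - th)) + integral\<^sup>N M G"
    unfolding G_def using e_rv Y_rv by (simp add: nn_integral_add emeasure_space_1)
  also have "integral\<^sup>N M G \<le> ennreal (S * K / 2 * (\<Sum>k. 1 / w k))"
    unfolding G_def
    by (rule nn_integral_suminf_sq_sum_innovations_le[OF indep mean0 e2 Y w_pos w_sum[folded w_def] \<open>n \<ge> 1\<close>])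
  finally show ?thesis
    unfolding w_def by (simp add: add_left_mono)
qed

lemma outer_nn_integral_sup_le_powr:
  fixes e Y :: "int \<Rightarrow> 'a \<Rightarrow> real" and lam :: "nat \<Rightarrow> real" and n :: nat
  assumes indep: "indep_vars (\<lambda>_. borel) e UNIV"
    and mean0: "\<And>t. expectation (e t) = 0"
    and e2: "\<And>t. integrable M (\<lambda>x. (e t x)^2)" "\<And>t. expectation (\<lambda>x. (e t x)^2) \<le> S"
    and Y: "\<And>t. Y t \<in> borel_measurable (past_sigma M e t)"
      "\<And>t. integrable M (\<lambda>x. (Y t x)^2)" "\<And>t. expectation (\<lambda>x. (Y t x)^2) \<le> K"
    and lam_lb: "\<And>k. k \<ge> 1 \<Longrightarrow> c * real k powr lamb \<le> lam k" and "c > 0" "lamb \<ge> 0"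
    and th: "0 \<le> th" "th \<le> 1" and zeta: "summable (\<lambda>k. real (Suc k) powr (-2 * lamb * th))"
    and "n \<ge> 1" "d > 0"
  shows "outer_nn_integral M (\<lambda>x. \<Squnion>b \<in> {b. inE lam b \<and> Enorm lam b \<le> 2 * B \<and> l2norm b \<le> d}.
      ennreal \<bar>(1 / sqrt (real n)) * (\<Sum>t=1..int n. e t x * Xt Y b t x)\<bar>)
    \<le> ennreal (((1 + 4 * B^2) / 2 + S * K * c powr (-2 * th) * (\<Sum>k. real (Suc k) powr (-2 * lamb * th)) / 2)
        * d powr (1 - th))"
proof -
  have lam_ge: "c \<le> lam (Suc k)" for k
  proof -
    have "c \<le> c * real (Suc k) powr lamb"
      using \<open>c > 0\<close> \<open>lamb \<ge> 0\<close> by (simp add: ge_one_powr_ge_zero)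
    also have "\<dots> \<le> lam (Suc k)"
      by (rule lam_lb) simp
    finally show ?thesis .
  qed
  note w_sum = summable_inverse_lag_weight[OF \<open>d > 0\<close> \<open>c > 0\<close> th lam_lb zeta]
  have "0 \<le> expectation (\<lambda>x. (e 0 x)^2)" "0 \<le> expectation (\<lambda>x. (Y 0 x)^2)"
    by (auto intro: integral_nonneg_AE)
  then have "0 \<le> S" "0 \<le> K"
    using e2(2)[of 0] Y(3)[of 0] by linarith+
  then have SK: "0 \<le> S * K / 2"
    by simp
  have "0 \<le> S * K / 2 * (\<Sum>k. 1 / lag_weight lam d th k)"
    using SK lag_weight_pos[OF \<open>d > 0\<close>] by (intro mult_nonneg_nonneg suminf_nonneg w_sum) (auto simp: less_imp_le)
  moreover have "(1 + 4 * B^2) / 2 * d powr (1 - th) + S * K / 2 * (\<Sum>k. 1 / lag_weight lam d th k)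
      \<le> ((1 + 4 * B^2) / 2 + S * K * c powr (-2 * th) * (\<Sum>k. real (Suc k) powr (-2 * lamb * th)) / 2)
        * d powr (1 - th)"
    using mult_left_mono[OF w_sum(2) SK] by (simp add: algebra_simps)
  ultimately have "ennreal ((1 + 4 * B^2) / 2 * d powr (1 - th)) + ennreal (S * K / 2 * (\<Sum>k. 1 / lag_weight lam d th k))
      \<le> ennreal (((1 + 4 * B^2) / 2 + S * K * c powr (-2 * th) * (\<Sum>k. real (Suc k) powr (-2 * lamb * th)) / 2)
        * d powr (1 - th))"
    by (simp add: ennreal_plus[symmetric] ennreal_leI del: ennreal_plus)
  with outer_nn_integral_sup_le_lag_weights[OF indep mean0 e2 Y \<open>c > 0\<close> lam_ge w_sum(1) \<open>n \<ge> 1\<close> \<open>d > 0\<close>]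
  show ?thesis
    by (rule order_trans)
qed

lemma expectation_sq_eq_of_distr_eq:
  fixes X X' :: "'a \<Rightarrow> real"
  assumes "X \<in> borel_measurable M" "X' \<in> borel_measurable M" "distr M borel X = distr M borel X'"
  shows "expectation (\<lambda>x. (X x)^2) = expectation (\<lambda>x. (X' x)^2)"
  using integral_distr[OF assms(1), of "\<lambda>y. y^2"] integral_distr[OF assms(2), of "\<lambda>y. y^2"] assms(3)
  by simp

end

theorem lemma6:
  fixes M :: "'a measure"
    and epsi :: "int \<Rightarrow> 'a \<Rightarrow> real"
    and Y :: "int \<Rightarrow> 'a \<Rightarrow> real"
    and lam phi :: "nat \<Rightarrow> real"
    and lamb c1 c2 B eps :: real
  assumes "prob_space M"
    and indep: "prob_space.indep_vars M (\<lambda>_. borel) epsi UNIV"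
    and ident: "\<forall>t. distr M borel (epsi t) = distr M borel (epsi 0)"
    and mean0: "\<forall>t. integrable M (epsi t) \<and> prob_space.expectation M (epsi t) = 0"
    and var: "\<forall>t. integrable M (\<lambda>x. (epsi t x)^2) \<and> prob_space.expectation M (\<lambda>x. (epsi t x)^2) > 0"
    and fourth: "\<forall>t. integrable M (\<lambda>x. (epsi t x)^4)"
    and lam_gt: "lamb > 1/2"
    and c12: "0 < c1" "c1 \<le> c2"
    and lam_bounds: "\<forall>k\<ge>1. c1 * real k powr lamb \<le> lam k \<and> lam k \<le> c2 * real k powr lamb"
    and phiE: "inE lam phi"
    and phi_root: "\<forall>z::complex. norm z \<le> 1 \<longrightarrow>
                     1 - (\<Sum>k. complex_of_real (phi (Suc k)) * z ^ Suc k) \<noteq> 0"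
    and Y_rv: "\<forall>t. Y t \<in> borel_measurable M"
    and Y_causal: "\<forall>t. Y t \<in> borel_measurable (past_sigma M epsi t)"
    and Y_L2: "\<exists>K. \<forall>t. integrable M (\<lambda>x. (Y t x)^2) \<and> prob_space.expectation M (\<lambda>x. (Y t x)^2) \<le> K"
    and AR: "\<forall>t. AE x in M. (\<lambda>k. phi (Suc k) * Y (t - int (Suc k)) x) sums (Y t x - epsi t x)"
    and B_pos: "B > 0"
    and eps_rng: "0 < eps" "eps < 2 * lamb - 1"
  shows "\<exists>C::real. \<forall>n::nat. \<forall>\<delta>::real. n \<ge> 1 \<longrightarrow> 0 < \<delta> \<longrightarrow> \<delta> \<le> 1 \<longrightarrow>
           outer_nn_integral M
             (\<lambda>x. \<Squnion>b \<in> {b. inE lam b \<and> Enorm lam b \<le> 2 * B \<and> l2norm b \<le> \<delta>}.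
                 ennreal \<bar>(1 / sqrt (real n)) * (\<Sum>t=1..int n. epsi t x * Xt Y b t x)\<bar>)
           \<le> ennreal (C * \<delta> powr ((2 * lamb - eps - 1) / (2 * lamb - eps)))"
proof -
  interpret prob_space M by fact
  obtain K where Y2: "\<And>t. integrable M (\<lambda>x. (Y t x)^2)" "\<And>t. expectation (\<lambda>x. (Y t x)^2) \<le> K"
    using Y_L2 by auto
  have rv: "\<And>t. epsi t \<in> borel_measurable M"
    using indep unfolding indep_vars_def2 by auto
  define S where "S = expectation (\<lambda>x. (epsi 0 x)^2)"
  have e2: "expectation (\<lambda>x. (epsi t x)^2) \<le> S" for t
    unfolding S_def using expectation_sq_eq_of_distr_eq[OF rv rv ident[rule_format, of t]] by simp
  define th where "th = 1 / (2 * lamb - eps)"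
  have th: "0 \<le> th" "th \<le> 1" "2 * lamb * th > 1"
    unfolding th_def using eps_rng by (auto simp: field_simps)
  have zeta: "summable (\<lambda>k. real (Suc k) powr (-2 * lamb * th))"
    using th(3) summable_real_powr_iff[of "-2 * lamb * th"] by (subst summable_Suc_iff) simp
  have expo: "(2 * lamb - eps - 1) / (2 * lamb - eps) = 1 - th"
    unfolding th_def using eps_rng by (simp add: field_simps)
  have e: "\<And>t. expectation (epsi t) = 0" "\<And>t. integrable M (\<lambda>x. (epsi t x)^2)"
    using mean0 var by auto
  have lam: "\<And>k. k \<ge> 1 \<Longrightarrow> c1 * real k powr lamb \<le> lam k" "lamb \<ge> 0"
    using lam_bounds lam_gt by auto
  show ?thesis
    unfolding expo
    by (intro exI[where x="(1 + 4 * B^2) / 2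
          + S * K * c1 powr (-2 * th) * (\<Sum>k. real (Suc k) powr (-2 * lamb * th)) / 2"] allI impI
        outer_nn_integral_sup_le_powr[OF indep e e2 Y_causal[rule_format] Y2 lam(1) c12(1)
          lam(2) th(1,2) zeta])
qed

end
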